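(* With the notation below, there exists a strategy (ancilla $E$, unitary $U$ on $AE=B_0B_1B'$, projective measurement $\{R^{b'}\}_{b'\in\{0,1\}}$ on $B'$, and projective measurements $\{\Pi^{\mathbf e}_{i\mathbf s b'}\}_{\mathbf e\in\{0,1\}^n}$ on $B_i$) achieving $p_n=\bigl(\frac34\bigr)^n$ for every $n\ge1$. Notation: for $a\in\{0,1\}$, $\lvert \hat a\rangle=\frac{1}{\sqrt2}(\lvert 0\rangle+(-1)^a\lvert 1\rangle)$; for bits $r_0,r_1,s$, $\lvert\psi^{s}_{r_0r_1}\rangle_{A_0A_1}=\lvert r_0\rangle_{A_s}\otimes\lvert \hat r_1\rangle_{A_{\bar s}}$; for strings $\mathbf r_0,\mathbf r_1,\mathbf s\in\{0,1\}^n$, $\lvert\Psi^{\mathbf s}_{\mathbf r_0\mathbf r_1}\rangle_A=\bigotimes_{j=1}^n\lvert\psi^{s^j}_{r_0^jr_1^j}\rangle_{A_0^jA_1^j}$. A strategy consists of a finite-dimensional ancilla $E$ in a pure state $\lvert\chi\rangle$, a unitary $U$ on $AE$ with $AE=B_0B_1B'$ (finite-dimensional subsystems), a projective measurement $\{R^{b'}\}$ on $B'$, and for each $i,\mathbf s,b'$ a projective measurement $\{\Pi^{\mathbf e}_{i\mathbf s b'}\}_{\mathbf e\in\{0,1\}^n}$ on $B_i$; with $\lvert\Phi^{\mathbf s}_{\mathbf r_0\mathbf r_1}\rangle=U(\lvert\Psi^{\mathbf s}_{\mathbf r_0\mathbf r_1}\rangle\otimes\lvert\chi\rangle)$, $$p_n=\frac{1}{2^{3n}}\sum_{\mathbf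 r_0,\mathbf r_1,\mathbf s}\sum_{b'}\langle\Phi^{\mathbf s}_{\mathbf r_0\mathbf r_1}\rvert\,\Pi^{\mathbf r_{b'}}_{0\mathbf s b'}\otimes\Pi^{\mathbf r_{\bar b'}}_{1\mathbf s b'}\otimes R^{b'}\,\lvert\Phi^{\mathbf s}_{\mathbf r_0\mathbf r_1}\rangle.$$
   Context: $p_n$ is the probability that Bob simultaneously guesses $\mathbf r_{b'}$ from $B_0$ and $\mathbf r_{\bar b'}$ from $B_1$ for uniformly random $\mathbf r_0,\mathbf r_1,\mathbf s$, where $\bar b'=b'\oplus1$. *)

theory Defs
  imports Complex_Main "Jordan_Normal_Form.Matrix"
begin

definition adj :: "complex mat \<Rightarrow> complex mat" where
  "adj M = mat (dim_col M) (dim_row M) (\<lambda>(i,j). cnj (M $$ (j,i)))"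

definition unitary_mat :: "nat \<Rightarrow> complex mat \<Rightarrow> bool" where
  "unitary_mat d U \<longleftrightarrow> U \<in> carrier_mat d d \<and> U * adj U = 1\<^sub>m d \<and> adj U * U = 1\<^sub>m d"

text \<open>Kronecker (tensor) product of matrices and of vectors, standard ordering
  (the index of the first factor is the most significant).\<close>
definition kron :: "complex mat \<Rightarrow> complex mat \<Rightarrow> complex mat" where
  "kron A B = mat (dim_row A * dim_row B) (dim_col A * dim_col B)
     (\<lambda>(i,j). A $$ (i div dim_row B, j div dim_col B) * B $$ (i mod dim_row B, j mod dim_col B))"

definition kron_vec :: "complex vec \<Rightarrow> complex vec \<Rightarrow> complex vec" where
  "kron_vec v w = vec (dim_vec v * dim_vec w) (\<lambda>i. v $ (i div dim_vec w) * w $ (i mod dim_vec w))"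

definition unit_vec :: "nat \<Rightarrow> complex vec \<Rightarrow> bool" where
  "unit_vec d v \<longleftrightarrow> v \<in> carrier_vec d \<and> (\<Sum>i<d. cmod (v $ i) ^ 2) = 1"

definition expect :: "complex vec \<Rightarrow> complex mat \<Rightarrow> complex" where
  "expect \<phi> M = (\<Sum>i<dim_vec \<phi>. \<Sum>j<dim_vec \<phi>. cnj (\<phi> $ i) * M $$ (i,j) * \<phi> $ j)"

definition projector :: "nat \<Rightarrow> complex mat \<Rightarrow> bool" where
  "projector d P \<longleftrightarrow> P \<in> carrier_mat d d \<and> P * P = P \<and> adj P = P"

definition proj_meas :: "nat \<Rightarrow> 'k set \<Rightarrow> ('k \<Rightarrow> complex mat) \<Rightarrow> bool" where
  "proj_meas d X P \<longleftrightarrow> finite X \<and> (\<forall>x\<in>X. projector d (P x)) \<and>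
     (\<forall>i<d. \<forall>j<d. (\<Sum>x\<in>X. P x $$ (i,j)) = (if i = j then 1 else 0))"

section \<open>The states of the protocol (bits are booleans, True = 1)\<close>

definition bitstrings :: "nat \<Rightarrow> bool list set" where
  "bitstrings n = {xs. length xs = n}"

definition ket :: "bool \<Rightarrow> complex vec" where
  "ket a = vec 2 (\<lambda>i. if i = (if a then 1 else 0) then 1 else 0)"

definition ket_hat :: "bool \<Rightarrow> complex vec" where
  "ket_hat a = vec 2 (\<lambda>i. if i = 0 then 1 / complex_of_real (sqrt 2)
                         else (if a then -1 else 1) / complex_of_real (sqrt 2))"

text \<open>\<open>|\<psi>^s_{r0 r1}\<rangle>_{A0 A1} = |r0\<rangle>_{A_s} \<otimes> |\<hat>r1\<rangle>_{A_{\<not>s}}\<close>, written in the order \<open>A0 \<otimes> A1\<close>.\<close>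
definition psi :: "bool \<Rightarrow> bool \<Rightarrow> bool \<Rightarrow> complex vec" where
  "psi s r0 r1 = (if s then kron_vec (ket_hat r1) (ket r0) else kron_vec (ket r0) (ket_hat r1))"

text \<open>\<open>|\<Psi>^s_{r0 r1}\<rangle>_A = \<Otimes>_{j=1}^n |\<psi>^{s^j}_{r0^j r1^j}\<rangle>_{A0^j A1^j}\<close>; arguments \<open>s r0 r1\<close>.\<close>
fun Psi :: "bool list \<Rightarrow> bool list \<Rightarrow> bool list \<Rightarrow> complex vec" where
  "Psi (s # ss) (a # as) (b # bs) = kron_vec (psi s a b) (Psi ss as bs)"
| "Psi _ _ _ = vec 1 (\<lambda>_. 1)"

text \<open>A strategy for \<open>n\<close> rounds: ancilla \<open>E = \<complex>^dE\<close> in pure state \<open>\<chi>\<close>, unitary \<open>U\<close> on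
  \<open>AE = \<complex>^(4^n) \<otimes> \<complex>^dE\<close>, a decomposition \<open>AE = B0 B1 B'\<close> with \<open>B0 = \<complex>^d0\<close>, \<open>B1 = \<complex>^d1\<close>,
  \<open>B' = \<complex>^d2\<close> (standard tensor ordering), a projective measurement \<open>R\<close> on \<open>B'\<close> and
  projective measurements \<open>P0 s b'\<close> on \<open>B0\<close>, \<open>P1 s b'\<close> on \<open>B1\<close> with outcomes in \<open>{0,1}^n\<close>.\<close>
definition is_strategy :: "nat \<Rightarrow> nat \<Rightarrow> complex vec \<Rightarrow> complex mat \<Rightarrow> nat \<Rightarrow> nat \<Rightarrow> nat
    \<Rightarrow> (bool \<Rightarrow> complex mat)
    \<Rightarrow> (bool list \<Rightarrow> bool \<Rightarrow> bool list \<Rightarrow> complex mat)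
    \<Rightarrow> (bool list \<Rightarrow> bool \<Rightarrow> bool list \<Rightarrow> complex mat) \<Rightarrow> bool" where
  "is_strategy n dE \<chi> U d0 d1 d2 R P0 P1 \<longleftrightarrow>
     unit_vec dE \<chi> \<and>
     unitary_mat (4 ^ n * dE) U \<and>
     d0 * d1 * d2 = 4 ^ n * dE \<and>
     proj_meas d2 UNIV R \<and>
     (\<forall>s\<in>bitstrings n. \<forall>b'. proj_meas d0 (bitstrings n) (P0 s b') \<and>
                               proj_meas d1 (bitstrings n) (P1 s b'))"

text \<open>\<open>p_n\<close>; here \<open>r_{b'}\<close> is \<open>if b' then r1 else r0\<close>.\<close>
definition win_prob :: "nat \<Rightarrow> complex vec \<Rightarrow> complex mat
    \<Rightarrow> (bool \<Rightarrow> complex mat)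
    \<Rightarrow> (bool list \<Rightarrow> bool \<Rightarrow> bool list \<Rightarrow> complex mat)
    \<Rightarrow> (bool list \<Rightarrow> bool \<Rightarrow> bool list \<Rightarrow> complex mat) \<Rightarrow> complex" where
  "win_prob n \<chi> U R P0 P1 =
     1 / 2 ^ (3 * n) *
     (\<Sum>r0\<in>bitstrings n. \<Sum>r1\<in>bitstrings n. \<Sum>s\<in>bitstrings n. \<Sum>b'\<in>(UNIV :: bool set).
        expect (U *\<^sub>v kron_vec (Psi s r0 r1) \<chi>)
          (kron (kron (P0 s b' (if b' then r1 else r0)) (P1 s b' (if b' then r0 else r1))) (R b')))"

end

theory Submission
  imports Defs
begin

(* His unitary merely regroups the 2n qubits so that B0 holds the A0-qubits
   and B1 the A1-qubits of all rounds.  He measures the j-th qubit of B0 in the basis s^j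
   (computational for 0, Hadamard for 1) and the j-th qubit of B1 in the other basis.  Every
   qubit is then measured in the basis it was prepared in, so B0 yields r1^j where s^j = 1 and
   r0^j elsewhere, and B1 yields r0^j where s^j = 1 and r1^j elsewhere.  Both guesses are right
   iff r0^j = r1^j whenever s^j = 1, which holds for 6 of the 8 values of (r0^j, r1^j, s^j);
   hence p_n = (6/8)^n. *)

section \<open>Kronecker products and projective measurements\<close>

lemma sum_lessThan_mult_div_mod:
  fixes a b :: nat
  shows "(\<Sum>k<a * b. f (k div b) (k mod b)) = (\<Sum>i<a. \<Sum>j<b. f i j)"
proof -
  have "(\<Sum>k<a * b. f (k div b) (k mod b)) =
      (\<Sum>i<a. \<Sum>k\<in>{i * b..<i * b + b}. f (k div b) (k mod b))"
    by (simp add: sum.nat_group)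
  also have "\<dots> = (\<Sum>i<a. \<Sum>j<b. f ((i * b + j) div b) ((i * b + j) mod b))"
    by (simp only: sum.atLeastLessThan_shift_0 atLeast0LessThan add_diff_cancel_left' comp_def)
  also have "\<dots> = (\<Sum>i<a. \<Sum>j<b. f i j)"
    by (intro sum.cong refl) auto
  finally show ?thesis .
qed

lemma sum_UNIV_bool: "(\<Sum>b\<in>UNIV. f b) = f False + f True"
  by (simp add: UNIV_bool)

lemma mod_less_of_less_mult: "i < a * b \<Longrightarrow> i mod b < (b::nat)"
  by (metis mod_less_divisor mult_0_right not_less_zero neq0_conv)

lemma div_mod_eq_iff: "i div b = j div b \<and> i mod b = j mod b \<longleftrightarrow> i = (j::nat)"
  by (metis div_mult_mod_eq)

lemma dim_kron [simp]:
  "dim_row (kron A B) = dim_row A * dim_row B" "dim_col (kron A B) = dim_col A * dim_col B"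
  by (simp_all add: kron_def)

lemma index_kron:
  "i < dim_row A * dim_row B \<Longrightarrow> j < dim_col A * dim_col B \<Longrightarrow>
   kron A B $$ (i, j) = A $$ (i div dim_row B, j div dim_col B) * B $$ (i mod dim_row B, j mod dim_col B)"
  by (simp add: kron_def)

lemma dim_kron_vec [simp]: "dim_vec (kron_vec v w) = dim_vec v * dim_vec w"
  by (simp add: kron_vec_def)

lemma index_kron_vec:
  "i < dim_vec v * dim_vec w \<Longrightarrow> kron_vec v w $ i = v $ (i div dim_vec w) * w $ (i mod dim_vec w)"
  by (simp add: kron_vec_def)

lemma dim_adj [simp]: "dim_row (adj A) = dim_col A" "dim_col (adj A) = dim_row A"
  by (simp_all add: adj_def)

lemma index_adj [simp]: "i < dim_col A \<Longrightarrow> j < dim_row A \<Longrightarrow> adj A $$ (i, j) = cnj (A $$ (j, i))"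
  by (simp add: adj_def)

lemma kron_mult_kron_vec:
  assumes "dim_vec u = dim_col A" "dim_vec v = dim_col B"
  shows "kron A B *\<^sub>v kron_vec u v = kron_vec (A *\<^sub>v u) (B *\<^sub>v v)"
proof (rule eq_vecI)
  fix i assume "i < dim_vec (kron_vec (A *\<^sub>v u) (B *\<^sub>v v))"
  then have i: "i < dim_row A * dim_row B" by simp
  have "(kron A B *\<^sub>v kron_vec u v) $ i = (\<Sum>k<dim_col A * dim_col B.
      (A $$ (i div dim_row B, k div dim_col B) * u $ (k div dim_col B)) *
      (B $$ (i mod dim_row B, k mod dim_col B) * v $ (k mod dim_col B)))"
    using i assms by (simp add: scalar_prod_def atLeast0LessThan index_kron index_kron_vec mult_ac)
  also have "\<dots> = (\<Sum>p<dim_col A. \<Sum>q<dim_col B.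
      (A $$ (i div dim_row B, p) * u $ p) * (B $$ (i mod dim_row B, q) * v $ q))"
    by (rule sum_lessThan_mult_div_mod)
  also have "\<dots> = (\<Sum>p<dim_col A. A $$ (i div dim_row B, p) * u $ p) *
      (\<Sum>q<dim_col B. B $$ (i mod dim_row B, q) * v $ q)"
    by (simp add: sum_product)
  also have "\<dots> = kron_vec (A *\<^sub>v u) (B *\<^sub>v v) $ i"
    using i assms
    by (simp add: index_kron_vec scalar_prod_def atLeast0LessThan less_mult_imp_div_less mod_less_of_less_mult)
  finally show "(kron A B *\<^sub>v kron_vec u v) $ i = kron_vec (A *\<^sub>v u) (B *\<^sub>v v) $ i" .
qed simp

lemma kron_mult_kron:
  assumes "dim_col A = dim_row C" "dim_col B = dim_row D"
  shows "kron A B * kron C D = kron (A * C) (B * D)"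
proof (rule eq_matI)
  fix i j assume "i < dim_row (kron (A * C) (B * D))" "j < dim_col (kron (A * C) (B * D))"
  then have i: "i < dim_row A * dim_row B" and j: "j < dim_col C * dim_col D" by auto
  have "(kron A B * kron C D) $$ (i, j) = (\<Sum>k<dim_col A * dim_col B.
      (A $$ (i div dim_row B, k div dim_col B) * C $$ (k div dim_col B, j div dim_col D)) *
      (B $$ (i mod dim_row B, k mod dim_col B) * D $$ (k mod dim_col B, j mod dim_col D)))"
    using i j assms
    by (simp add: scalar_prod_def atLeast0LessThan index_kron less_mult_imp_div_less
        mod_less_of_less_mult mult_ac)
  also have "\<dots> = (\<Sum>p<dim_col A. \<Sum>q<dim_col B.
      (A $$ (i div dim_row B, p) * C $$ (p, j div dim_col D)) *
      (B $$ (i mod dim_row B, q) * D $$ (q, j mod dim_col D)))"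
    by (rule sum_lessThan_mult_div_mod)
  also have "\<dots> = (\<Sum>p<dim_col A. A $$ (i div dim_row B, p) * C $$ (p, j div dim_col D)) *
      (\<Sum>q<dim_col B. B $$ (i mod dim_row B, q) * D $$ (q, j mod dim_col D))"
    by (simp add: sum_product)
  also have "\<dots> = kron (A * C) (B * D) $$ (i, j)"
    using i j assms
    by (simp add: index_kron scalar_prod_def atLeast0LessThan less_mult_imp_div_less mod_less_of_less_mult)
  finally show "(kron A B * kron C D) $$ (i, j) = kron (A * C) (B * D) $$ (i, j)" .
qed auto

lemma adj_kron: "adj (kron A B) = kron (adj A) (adj B)"
  by (rule eq_matI) (auto simp: index_kron less_mult_imp_div_less mod_less_of_less_mult)

lemma kron_one_mat: "kron (1\<^sub>m a) (1\<^sub>m b) = 1\<^sub>m (a * b)"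
  using div_mod_eq_iff
  by (intro eq_matI) (auto simp: index_kron less_mult_imp_div_less mod_less_of_less_mult)

lemma kron_one_mat_1: "kron M (1\<^sub>m 1) = M"
  by (rule eq_matI) (auto simp: index_kron)

lemma kron_zero_mat_1: "kron M (0\<^sub>m 1 1) = 0\<^sub>m (dim_row M) (dim_col M)"
  by (rule eq_matI) (auto simp: index_kron)

lemma kron_vec_1: "kron_vec v (vec 1 (\<lambda>_. 1)) = v"
  by (rule eq_vecI) (auto simp: index_kron_vec)

lemma one_mat_mult_vec: "dim_vec v = n \<Longrightarrow> 1\<^sub>m n *\<^sub>v v = (v :: complex vec)"
  by (auto intro: one_mult_mat_vec)

lemma kron_vec_assoc: "kron_vec (kron_vec u v) w = kron_vec u (kron_vec v w)"
proof (rule eq_vecI)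
  fix i assume "i < dim_vec (kron_vec u (kron_vec v w))"
  then have i: "i < dim_vec u * (dim_vec v * dim_vec w)" by simp
  then have "dim_vec w \<noteq> 0" by auto
  then have "i mod (dim_vec v * dim_vec w) div dim_vec w = i div dim_vec w mod dim_vec v"
    and "i mod (dim_vec v * dim_vec w) mod dim_vec w = i mod dim_vec w"
    by (simp_all add: mod_mult2_eq mult.commute[of "dim_vec v"])
  moreover have "i div (dim_vec v * dim_vec w) = i div dim_vec w div dim_vec v"
    by (metis div_mult2_eq mult.commute)
  moreover have "i div dim_vec w < dim_vec u * dim_vec v"
    using i by (simp add: less_mult_imp_div_less mult.assoc)
  ultimately show "kron_vec (kron_vec u v) w $ i = kron_vec u (kron_vec v w) $ i"
    using i mod_less_of_less_mult[OF i] by (simp add: index_kron_vec mult.assoc)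
qed (simp add: mult.assoc)

lemma adj_one_mat: "adj (1\<^sub>m n) = 1\<^sub>m n"
  by (rule eq_matI) auto

lemma adj_mult: "dim_col A = dim_row B \<Longrightarrow> adj (A * B) = adj B * adj A"
  by (rule eq_matI) (auto simp: scalar_prod_def atLeast0LessThan mult.commute)

lemma unitary_mat_one: "unitary_mat n (1\<^sub>m n)"
  by (simp add: unitary_mat_def adj_one_mat)

lemma unitary_mat_mult:
  assumes "unitary_mat d A" "unitary_mat d B"
  shows "unitary_mat d (A * B)"
proof -
  have A: "A \<in> carrier_mat d d" "A * adj A = 1\<^sub>m d" "adj A * A = 1\<^sub>m d"
    and B: "B \<in> carrier_mat d d" "B * adj B = 1\<^sub>m d" "adj B * B = 1\<^sub>m d"
    using assms by (auto simp: unitary_mat_def)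
  have adjA: "adj A \<in> carrier_mat d d" and adjB: "adj B \<in> carrier_mat d d"
    using A(1) B(1) by auto
  have "A * B * adj (A * B) = A * (B * adj B) * adj A"
    using A(1) B(1) adjA adjB by (simp add: adj_mult assoc_mult_mat[of _ d d _ d _ d])
  moreover have "adj (A * B) * (A * B) = adj B * (adj A * A) * B"
    using A(1) B(1) adjA adjB by (simp add: adj_mult assoc_mult_mat[of _ d d _ d _ d])
  ultimately show ?thesis
    using A B unfolding unitary_mat_def by auto
qed

lemma unitary_mat_kron:
  assumes "unitary_mat a A" "unitary_mat b B"
  shows "unitary_mat (a * b) (kron A B)"
  using assms by (auto simp: unitary_mat_def adj_kron kron_mult_kron kron_one_mat)

lemma expect_eq_sum_mult_mat_vec:
  "M \<in> carrier_mat (dim_vec \<phi>) (dim_vec \<phi>) \<Longrightarrow>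
   expect \<phi> M = (\<Sum>i<dim_vec \<phi>. cnj (\<phi> $ i) * (M *\<^sub>v \<phi>) $ i)"
  unfolding expect_def
  by (intro sum.cong refl) (simp add: scalar_prod_def atLeast0LessThan sum_distrib_left mult.assoc)

lemma expect_kron:
  assumes "A \<in> carrier_mat (dim_vec u) (dim_vec u)" "B \<in> carrier_mat (dim_vec v) (dim_vec v)"
  shows "expect (kron_vec u v) (kron A B) = expect u A * expect v B"
proof -
  have "expect (kron_vec u v) (kron A B) = (\<Sum>i<dim_vec u * dim_vec v.
      cnj (kron_vec u v $ i) * kron_vec (A *\<^sub>v u) (B *\<^sub>v v) $ i)"
    using assms by (subst expect_eq_sum_mult_mat_vec) (auto simp: kron_mult_kron_vec)
  also have "\<dots> = (\<Sum>i<dim_vec u * dim_vec v.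
      (cnj (u $ (i div dim_vec v)) * (A *\<^sub>v u) $ (i div dim_vec v)) *
      (cnj (v $ (i mod dim_vec v)) * (B *\<^sub>v v) $ (i mod dim_vec v)))"
    using assms by (intro sum.cong refl) (simp add: index_kron_vec)
  also have "\<dots> = (\<Sum>p<dim_vec u. \<Sum>q<dim_vec v.
      (cnj (u $ p) * (A *\<^sub>v u) $ p) * (cnj (v $ q) * (B *\<^sub>v v) $ q))"
    by (rule sum_lessThan_mult_div_mod)
  also have "\<dots> = expect u A * expect v B"
    using assms by (simp add: expect_eq_sum_mult_mat_vec sum_product)
  finally show ?thesis .
qed

lemma expect_zero_mat: "dim_vec \<phi> = a \<Longrightarrow> dim_vec \<phi> = b \<Longrightarrow> expect \<phi> (0\<^sub>m a b) = 0"
  unfolding expect_def by (intro sum.neutral ballI) auto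

lemma projector_kron:
  assumes "projector a A" "projector b B"
  shows "projector (a * b) (kron A B)"
  using assms by (auto simp: projector_def kron_mult_kron adj_kron)

lemma proj_meas_kron:
  assumes P: "proj_meas a X P" and Q: "proj_meas b Y Q"
  shows "proj_meas (a * b) (X \<times> Y) (\<lambda>(x, y). kron (P x) (Q y))"
proof -
  have dim_P: "P x \<in> carrier_mat a a" if "x \<in> X" for x
    using P that by (auto simp: proj_meas_def projector_def)
  have dim_Q: "Q y \<in> carrier_mat b b" if "y \<in> Y" for y
    using Q that by (auto simp: proj_meas_def projector_def)
  have "(\<Sum>(x, y)\<in>X \<times> Y. kron (P x) (Q y) $$ (i, j)) = (if i = j then 1 else 0)"
    if ij: "i < a * b" "j < a * b" for i j
  proof -
    have "(\<Sum>(x, y)\<in>X \<times> Y. kron (P x) (Q y) $$ (i, j)) =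
        (\<Sum>(x, y)\<in>X \<times> Y. P x $$ (i div b, j div b) * Q y $$ (i mod b, j mod b))"
    proof (intro sum.cong refl, clarify)
      fix x y assume "x \<in> X" "y \<in> Y"
      with carrier_matD[OF dim_P] carrier_matD[OF dim_Q] ij show "kron (P x) (Q y) $$ (i, j) =
          P x $$ (i div b, j div b) * Q y $$ (i mod b, j mod b)"
        by (simp add: index_kron)
    qed
    also have "\<dots> = (\<Sum>x\<in>X. P x $$ (i div b, j div b)) * (\<Sum>y\<in>Y. Q y $$ (i mod b, j mod b))"
      by (simp add: sum_product sum.cartesian_product)
    also have "\<dots> = (if i div b = j div b then 1 else 0) * (if i mod b = j mod b then 1 else 0)"
      using P Q ij unfolding proj_meas_def
      by (simp add: less_mult_imp_div_less mod_less_of_less_mult)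
    also have "\<dots> = (if i = j then 1 else 0)"
      using div_mod_eq_iff[of i b j] by auto
    finally show ?thesis .
  qed
  with P Q show ?thesis
    by (auto simp: proj_meas_def projector_kron case_prod_unfold)
qed

lemma proj_meas_reindex:
  "inj_on h X \<Longrightarrow> proj_meas d (h ` X) P \<longleftrightarrow> proj_meas d X (P \<circ> h)"
  by (simp add: proj_meas_def sum.reindex)

section \<open>Qubits in the computational and the Hadamard basis\<close>

definition inv_sqrt2 :: complex where
  "inv_sqrt2 = 1 / complex_of_real (sqrt 2)"

lemma inv_sqrt2_sq: "inv_sqrt2 * inv_sqrt2 = 1 / 2"
  by (simp add: inv_sqrt2_def flip: of_real_mult)

lemma cnj_inv_sqrt2 [simp]: "cnj inv_sqrt2 = inv_sqrt2"
  by (simp add: inv_sqrt2_def)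

definition basis_state :: "bool \<Rightarrow> bool \<Rightarrow> complex vec" where
  "basis_state h a = (if h then ket_hat a else ket a)"

definition proj :: "complex vec \<Rightarrow> complex mat" where
  "proj v = mat (dim_vec v) (dim_vec v) (\<lambda>(i, j). v $ i * cnj (v $ j))"

lemma dim_basis_state [simp]: "dim_vec (basis_state h a) = 2"
  by (simp add: basis_state_def ket_def ket_hat_def)

lemma basis_state_index:
  "basis_state h a $ 0 = (if h then inv_sqrt2 else of_bool (\<not> a))"
  "basis_state h a $ Suc 0 = (if h then (if a then - inv_sqrt2 else inv_sqrt2) else of_bool a)"
  by (simp_all add: basis_state_def ket_def ket_hat_def inv_sqrt2_def)

lemma less_2_cases: "(i::nat) < 2 \<Longrightarrow> i = 0 \<or> i = Suc 0"
  by auto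

lemma sum_lessThan_2: "(\<Sum>k<2. f k) = f 0 + f (Suc 0)"
  by (simp add: numeral_2_eq_2)

lemma proj_basis_state: "proj (basis_state h a) = mat 2 2 (\<lambda>(i, j).
    if h then (if i = j \<or> \<not> a then 1 / 2 else - 1 / 2) else of_bool (i = j \<and> (i = Suc 0) = a))"
  by (rule eq_matI) (auto simp: proj_def basis_state_index inv_sqrt2_sq dest!: less_2_cases)

lemma proj_meas_basis_state: "proj_meas 2 UNIV (\<lambda>a. proj (basis_state h a))"
  unfolding proj_meas_def projector_def proj_basis_state
  by (auto intro!: eq_matI simp: scalar_prod_def atLeast0LessThan sum_lessThan_2 UNIV_bool
      dest!: less_2_cases)

lemma expect_proj_basis_state: "expect (basis_state h b) (proj (basis_state h a)) = of_bool (a = b)"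
  by (auto simp: expect_def sum_lessThan_2 proj_basis_state basis_state_index
      inv_sqrt2_sq algebra_simps) (simp_all flip: mult.assoc add: inv_sqrt2_sq)

lemma bitstrings_0: "bitstrings 0 = {[]}"
  by (auto simp: bitstrings_def)

lemma bitstrings_Suc: "bitstrings (Suc n) = (\<lambda>(e, es). e # es) ` (UNIV \<times> bitstrings n)"
  by (auto simp: bitstrings_def image_iff length_Suc_conv)

lemma inj_Cons_pair: "inj (\<lambda>(e, es). e # es)"
  by (auto simp: inj_def)

lemma sum_bitstrings_Suc:
  "(\<Sum>xs\<in>bitstrings (Suc n). f xs) =
     (\<Sum>xs\<in>bitstrings n. f (True # xs)) + (\<Sum>xs\<in>bitstrings n. f (False # xs))"
proof -
  have "(\<Sum>xs\<in>bitstrings (Suc n). f xs) = (\<Sum>(e, es)\<in>UNIV \<times> bitstrings n. f (e # es))"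
    unfolding bitstrings_Suc
    by (subst sum.reindex) (auto simp: inj_on_subset[OF inj_Cons_pair] intro!: sum.cong)
  then show ?thesis
    by (simp add: sum.cartesian_product[symmetric] UNIV_bool add.commute)
qed

fun basis_vec :: "bool list \<Rightarrow> bool list \<Rightarrow> complex vec" where
  "basis_vec (h # hs) (a # as) = kron_vec (basis_state h a) (basis_vec hs as)"
| "basis_vec _ _ = vec 1 (\<lambda>_. 1)"

fun basis_proj :: "bool list \<Rightarrow> bool list \<Rightarrow> complex mat" where
  "basis_proj (h # hs) (e # es) = kron (proj (basis_state h e)) (basis_proj hs es)"
| "basis_proj _ _ = 1\<^sub>m 1"

lemma dim_basis_vec: "length hs = length as \<Longrightarrow> dim_vec (basis_vec hs as) = 2 ^ length hs"
  by (induction hs as rule: list_induct2) auto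

lemma basis_proj_carrier:
  "length hs = length es \<Longrightarrow> basis_proj hs es \<in> carrier_mat (2 ^ length hs) (2 ^ length hs)"
  by (induction hs es rule: list_induct2) (auto simp: proj_def)

lemma proj_meas_basis_proj: "proj_meas (2 ^ length hs) (bitstrings (length hs)) (basis_proj hs)"
proof (induction hs)
  case Nil
  show ?case
    by (simp add: proj_meas_def projector_def bitstrings_0 adj_one_mat)
next
  case (Cons h hs)
  have "proj_meas (2 ^ length (h # hs)) (UNIV \<times> bitstrings (length hs))
      (basis_proj (h # hs) \<circ> (\<lambda>(e, es). e # es))"
    using proj_meas_kron[OF proj_meas_basis_state Cons.IH] by (simp add: comp_def case_prod_unfold)
  then show ?case
    unfolding length_Cons bitstrings_Suc
    by (subst proj_meas_reindex) (auto intro: inj_on_subset[OF inj_Cons_pair])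
qed

lemma expect_basis_proj:
  "length hs = length as \<Longrightarrow> length as = length es \<Longrightarrow>
   expect (basis_vec hs as) (basis_proj hs es) = of_bool (as = es)"
proof (induction hs as es rule: list_induct3)
  case Nil
  show ?case
    by (simp add: expect_def)
next
  case (Cons h hs a as e es)
  have "proj (basis_state h e) \<in> carrier_mat (dim_vec (basis_state h a)) (dim_vec (basis_state h a))"
    by (simp add: proj_def)
  moreover have "basis_proj hs es \<in> carrier_mat (dim_vec (basis_vec hs as)) (dim_vec (basis_vec hs as))"
    using basis_proj_carrier[of hs es] dim_basis_vec[of hs as] Cons.hyps by simp
  ultimately have "expect (basis_vec (h # hs) (a # as)) (basis_proj (h # hs) (e # es)) =
      of_bool (e = a) * of_bool (as = es)"
    using Cons.IH by (simp add: expect_kron expect_proj_basis_state)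
  then show ?case
    by auto
qed

section \<open>Regrouping the registers\<close>

definition perm_mat :: "nat \<Rightarrow> (nat \<Rightarrow> nat) \<Rightarrow> complex mat" where
  "perm_mat m \<sigma> = mat m m (\<lambda>(i, j). of_bool (j = \<sigma> i))"

lemma dim_perm_mat [simp]: "dim_row (perm_mat m \<sigma>) = m" "dim_col (perm_mat m \<sigma>) = m"
  by (simp_all add: perm_mat_def)

lemma index_perm_mat: "i < m \<Longrightarrow> j < m \<Longrightarrow> perm_mat m \<sigma> $$ (i, j) = of_bool (j = \<sigma> i)"
  by (simp add: perm_mat_def)

lemma perm_mat_mult_vec:
  assumes "dim_vec w = m" "\<And>i. i < m \<Longrightarrow> \<sigma> i < m"
  shows "perm_mat m \<sigma> *\<^sub>v w = vec m (\<lambda>i. w $ \<sigma> i)"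
proof (rule eq_vecI)
  fix i assume "i < dim_vec (vec m (\<lambda>i. w $ \<sigma> i))"
  then have i: "i < m" by simp
  then have "(perm_mat m \<sigma> *\<^sub>v w) $ i = (\<Sum>k<m. if k = \<sigma> i then w $ k else 0)"
    using assms(1) by (auto simp: perm_mat_def scalar_prod_def atLeast0LessThan intro!: sum.cong)
  with i assms(2) show "(perm_mat m \<sigma> *\<^sub>v w) $ i = vec m (\<lambda>i. w $ \<sigma> i) $ i"
    by simp
qed (simp add: perm_mat_def)

lemma unitary_perm_mat:
  assumes \<sigma>: "bij_betw \<sigma> {..<m} {..<m}"
  shows "unitary_mat m (perm_mat m \<sigma>)"
proof -
  let ?P = "perm_mat m \<sigma>"
  have "?P * adj ?P = 1\<^sub>m m"
  proof (rule eq_matI)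
    fix i j assume "i < dim_row (1\<^sub>m m)" "j < dim_col (1\<^sub>m m)"
    then have ij: "i < m" "j < m" by auto
    have "(?P * adj ?P) $$ (i, j) = (\<Sum>k<m. if k = \<sigma> i then of_bool (k = \<sigma> j) else 0)"
      using ij by (simp add: perm_mat_def scalar_prod_def atLeast0LessThan)
    also have "\<dots> = of_bool (\<sigma> i = \<sigma> j)"
      using ij \<sigma> by (auto simp: bij_betw_def)
    also have "\<dots> = 1\<^sub>m m $$ (i, j)"
      using ij \<sigma> by (auto simp: bij_betw_def inj_on_def)
    finally show "(?P * adj ?P) $$ (i, j) = 1\<^sub>m m $$ (i, j)" .
  qed simp_all
  moreover have "adj ?P * ?P = 1\<^sub>m m"
  proof (rule eq_matI)
    fix i j assume "i < dim_row (1\<^sub>m m)" "j < dim_col (1\<^sub>m m)"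
    then have ij: "i < m" "j < m" by auto
    let ?g = "\<lambda>l. if l = i then of_bool (l = j) else 0 :: complex"
    have "(adj ?P * ?P) $$ (i, j) = (\<Sum>k<m. cnj (?P $$ (k, i)) * ?P $$ (k, j))"
      using ij by (simp add: scalar_prod_def atLeast0LessThan)
    also have "\<dots> = (\<Sum>k<m. ?g (\<sigma> k))"
      using ij by (intro sum.cong refl) (auto simp: index_perm_mat)
    also have "\<dots> = (\<Sum>l<m. ?g l)"
      using \<sigma> by (rule sum.reindex_bij_betw)
    also have "\<dots> = 1\<^sub>m m $$ (i, j)"
      using ij by simp
    finally show "(adj ?P * ?P) $$ (i, j) = 1\<^sub>m m $$ (i, j)" .
  qed simp_all
  ultimately show ?thesis
    by (simp add: unitary_mat_def carrier_matI)
qed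

definition swap_mat :: "nat \<Rightarrow> nat \<Rightarrow> complex mat" where
  "swap_mat a b = perm_mat (a * b) (\<lambda>i. (i mod a) * b + i div a)"

lemma dim_swap_mat [simp]: "dim_row (swap_mat a b) = a * b" "dim_col (swap_mat a b) = a * b"
  by (simp_all add: swap_mat_def)

lemma swap_index_less:
  fixes a b i :: nat
  assumes "i < a * b"
  shows "(i mod a) * b + i div a < a * b"
proof -
  have "i div a < b" "i mod a < a"
    using assms by (simp_all add: less_mult_imp_div_less mult.commute mod_less_of_less_mult)
  moreover have "(i mod a) * b + b \<le> a * b"
    using \<open>i mod a < a\<close> by (metis add.commute mult.commute mult_Suc_right mult_le_mono2 Suc_leI)
  ultimately show ?thesis
    by simp
qed

lemma swap_index_inverse:
  fixes a b i :: nat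
  assumes "i < a * b"
  shows "((i mod a) * b + i div a) mod b * a + ((i mod a) * b + i div a) div b = i"
proof -
  have "i div a < b"
    using assms by (simp add: less_mult_imp_div_less mult.commute)
  then show ?thesis
    by simp
qed

lemma unitary_swap_mat: "unitary_mat (a * b) (swap_mat a b)"
  unfolding swap_mat_def
proof (rule unitary_perm_mat, rule bij_betw_byWitness[where f' = "\<lambda>i. (i mod b) * a + i div b"])
  show "\<forall>i\<in>{..<a * b}. ((i mod a) * b + i div a) mod b * a + ((i mod a) * b + i div a) div b = i"
    using swap_index_inverse by blast
  show "\<forall>i\<in>{..<a * b}. ((i mod b) * a + i div b) mod a * b + ((i mod b) * a + i div b) div a = i"
    using swap_index_inverse[of _ b a] by (simp add: mult.commute)
  show "(\<lambda>i. (i mod a) * b + i div a) ` {..<a * b} \<subseteq> {..<a * b}"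
    using swap_index_less by auto
  show "(\<lambda>i. (i mod b) * a + i div b) ` {..<a * b} \<subseteq> {..<a * b}"
    using swap_index_less[of _ b a] by (auto simp: mult.commute)
qed

lemma swap_mat_kron_vec:
  assumes "dim_vec v = a" "dim_vec w = b"
  shows "swap_mat a b *\<^sub>v kron_vec v w = kron_vec w v"
proof -
  have "swap_mat a b *\<^sub>v kron_vec v w = vec (a * b) (\<lambda>i. kron_vec v w $ ((i mod a) * b + i div a))"
    unfolding swap_mat_def using assms swap_index_less by (intro perm_mat_mult_vec) auto
  also have "\<dots> = kron_vec w v"
  proof (rule eq_vecI)
    fix i assume "i < dim_vec (kron_vec w v)"
    then have i: "i < a * b"
      using assms by (simp add: mult.commute)
    moreover have "i div a < b"
      using i by (simp add: less_mult_imp_div_less mult.commute)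
    ultimately show "vec (a * b) (\<lambda>i. kron_vec v w $ ((i mod a) * b + i div a)) $ i = kron_vec w v $ i"
      using assms swap_index_less[OF i] by (simp add: index_kron_vec mult.commute)
  qed (use assms in simp)
  finally show ?thesis .
qed

(* Regroup the last n rounds, then move the A1-qubit of the first round past the A0-qubits
   of the other rounds. *)
primrec regroup_mat :: "nat \<Rightarrow> complex mat" where
  "regroup_mat 0 = 1\<^sub>m 1"
| "regroup_mat (Suc n) =
     kron (kron (1\<^sub>m 2) (swap_mat 2 (2 ^ n))) (1\<^sub>m (2 ^ n)) * kron (1\<^sub>m 4) (regroup_mat n)"

lemma four_pow_Suc: "(4::nat) ^ Suc n = 2 * (2 * 2 ^ n) * 2 ^ n"
  by (induction n) auto

lemma unitary_regroup_mat: "unitary_mat (4 ^ n) (regroup_mat n)"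
proof (induction n)
  case 0
  show ?case
    by (simp add: unitary_mat_one)
next
  case (Suc n)
  have "unitary_mat (4 ^ Suc n) (kron (kron (1\<^sub>m 2) (swap_mat 2 (2 ^ n))) (1\<^sub>m (2 ^ n)))"
    unfolding four_pow_Suc by (intro unitary_mat_kron unitary_mat_one unitary_swap_mat)
  moreover have "unitary_mat (4 ^ Suc n) (kron (1\<^sub>m 4) (regroup_mat n))"
    unfolding power_Suc by (intro unitary_mat_kron unitary_mat_one Suc.IH)
  ultimately show ?case
    by (simp only: regroup_mat.simps unitary_mat_mult)
qed

lemma regroup_mat_Suc_kron_vec:
  assumes dims: "dim_vec x = 2" "dim_vec y = 2" "dim_vec X = 2 ^ n" "dim_vec Y = 2 ^ n"
    and v: "dim_vec v = 4 ^ n" "regroup_mat n *\<^sub>v v = kron_vec X Y"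
  shows "regroup_mat (Suc n) *\<^sub>v kron_vec (kron_vec x y) v = kron_vec (kron_vec x X) (kron_vec y Y)"
proof -
  let ?K1 = "kron (kron (1\<^sub>m 2) (swap_mat 2 (2 ^ n))) (1\<^sub>m (2 ^ n))"
  let ?K2 = "kron (1\<^sub>m 4) (regroup_mat n)"
  have regroup: "dim_row (regroup_mat n) = 4 ^ n" "dim_col (regroup_mat n) = 4 ^ n"
    using unitary_regroup_mat[of n] by (auto simp: unitary_mat_def)
  have "?K1 \<in> carrier_mat (4 ^ Suc n) (4 ^ Suc n)"
    unfolding four_pow_Suc by (intro carrier_matI) simp_all
  moreover have "?K2 \<in> carrier_mat (4 ^ Suc n) (4 ^ Suc n)"
    unfolding power_Suc using regroup by (intro carrier_matI) simp_all
  moreover have "kron_vec (kron_vec x y) v \<in> carrier_vec (4 ^ Suc n)"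
    unfolding power_Suc using dims v by (intro carrier_vecI) simp
  ultimately have "regroup_mat (Suc n) *\<^sub>v kron_vec (kron_vec x y) v =
      ?K1 *\<^sub>v (?K2 *\<^sub>v kron_vec (kron_vec x y) v)"
    unfolding regroup_mat.simps by (rule assoc_mult_mat_vec)
  also have "?K2 *\<^sub>v kron_vec (kron_vec x y) v = kron_vec (kron_vec x y) (kron_vec X Y)"
    using regroup dims v by (subst kron_mult_kron_vec) (simp_all add: one_mat_mult_vec)
  also have "\<dots> = kron_vec (kron_vec x (kron_vec y X)) Y"
    by (simp only: kron_vec_assoc)
  also have "?K1 *\<^sub>v kron_vec (kron_vec x (kron_vec y X)) Y = kron_vec (kron_vec x (kron_vec X y)) Y"
    using dims by (simp add: kron_mult_kron_vec one_mat_mult_vec swap_mat_kron_vec)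
  also have "\<dots> = kron_vec (kron_vec x X) (kron_vec y Y)"
    by (simp only: kron_vec_assoc)
  finally show ?thesis .
qed

fun select_bits :: "bool list \<Rightarrow> bool list \<Rightarrow> bool list \<Rightarrow> bool list" where
  "select_bits (s # ss) (a # as) (b # bs) = (if s then b else a) # select_bits ss as bs"
| "select_bits _ _ _ = []"

lemma length_select_bits:
  "length s = length a \<Longrightarrow> length a = length b \<Longrightarrow> length (select_bits s a b) = length s"
  by (induction s a b rule: list_induct3) auto

lemma psi_eq_basis_state:
  "psi s a b = kron_vec (basis_state s (if s then b else a)) (basis_state (\<not> s) (if s then a else b))"
  by (simp add: psi_def basis_state_def)

lemma dim_Psi: "length s = length a \<Longrightarrow> length a = length b \<Longrightarrow> dim_vec (Psi s a b) = 4 ^ length s"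
  by (induction s a b rule: list_induct3) (auto simp: psi_def ket_def ket_hat_def)

lemma regroup_mat_Psi:
  "length s = length r0 \<Longrightarrow> length r0 = length r1 \<Longrightarrow>
   regroup_mat (length s) *\<^sub>v Psi s r0 r1 =
     kron_vec (basis_vec s (select_bits s r0 r1)) (basis_vec (map Not s) (select_bits s r1 r0))"
proof (induction s r0 r1 rule: list_induct3)
  case Nil
  show ?case
    using kron_vec_1[of "vec 1 (\<lambda>_. 1)"] by (simp add: one_mat_mult_vec)
next
  case (Cons s ss a as b bs)
  have "regroup_mat (Suc (length ss)) *\<^sub>v
      kron_vec (kron_vec (basis_state s (if s then b else a)) (basis_state (\<not> s) (if s then a else b)))
        (Psi ss as bs) =
      kron_vec (kron_vec (basis_state s (if s then b else a)) (basis_vec ss (select_bits ss as bs)))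
        (kron_vec (basis_state (\<not> s) (if s then a else b)) (basis_vec (map Not ss) (select_bits ss bs as)))"
    using Cons.hyps
    by (intro regroup_mat_Suc_kron_vec Cons.IH) (simp_all add: dim_basis_vec length_select_bits dim_Psi)
  then show ?case
    unfolding Psi.simps psi_eq_basis_state length_Cons basis_vec.simps select_bits.simps list.map .
qed

section \<open>The winning probability of the regrouping strategy\<close>

lemma sum_select_bits_agree:
  "(\<Sum>r0\<in>bitstrings n. \<Sum>r1\<in>bitstrings n. \<Sum>s\<in>bitstrings n.
      of_bool (select_bits s r0 r1 = r0 \<and> select_bits s r1 r0 = r1) :: complex) = 6 ^ n"
proof (induction n)
  case 0
  show ?case
    by (simp add: bitstrings_0)
next
  case (Suc n)
  then show ?case
    by (simp add: sum_bitstrings_Suc sum.distrib)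
qed

definition announce_zero :: "bool \<Rightarrow> complex mat" where
  "announce_zero b = (if b then 0\<^sub>m 1 1 else 1\<^sub>m 1)"

lemma proj_meas_announce_zero: "proj_meas 1 UNIV announce_zero"
  by (auto simp: proj_meas_def projector_def announce_zero_def adj_one_mat UNIV_bool intro!: eq_matI)

lemma is_strategy_regroup:
  "is_strategy n 1 (vec 1 (\<lambda>_. 1)) (regroup_mat n) (2 ^ n) (2 ^ n) 1 announce_zero
     (\<lambda>s _. basis_proj s) (\<lambda>s _. basis_proj (map Not s))"
proof -
  have "proj_meas (2 ^ n) (bitstrings n) (basis_proj hs)" if "length hs = n" for hs
    using proj_meas_basis_proj[of hs] that by simp
  then show ?thesis
    using unitary_regroup_mat[of n] proj_meas_announce_zero
    by (auto simp: is_strategy_def unit_vec_def bitstrings_def power_mult_distrib[symmetric])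
qed

lemma win_prob_regroup_summand:
  assumes "s \<in> bitstrings n" "r0 \<in> bitstrings n" "r1 \<in> bitstrings n"
  shows "(\<Sum>b'\<in>UNIV. expect (regroup_mat n *\<^sub>v kron_vec (Psi s r0 r1) (vec 1 (\<lambda>_. 1)))
      (kron (kron (basis_proj s (if b' then r1 else r0))
          (basis_proj (map Not s) (if b' then r0 else r1)))
        (announce_zero b'))) =
    of_bool (select_bits s r0 r1 = r0 \<and> select_bits s r1 r0 = r1)"
proof -
  have len: "length s = n" "length r0 = n" "length r1 = n"
    using assms by (simp_all add: bitstrings_def)
  let ?X = "basis_vec s (select_bits s r0 r1)" and ?Y = "basis_vec (map Not s) (select_bits s r1 r0)"
  have state: "regroup_mat n *\<^sub>v kron_vec (Psi s r0 r1) (vec 1 (\<lambda>_. 1)) = kron_vec ?X ?Y"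
    unfolding kron_vec_1 using regroup_mat_Psi[of s r0 r1] len by simp
  have dims: "dim_vec ?X = 2 ^ n" "dim_vec ?Y = 2 ^ n"
    using len by (simp_all add: dim_basis_vec length_select_bits)
  have "expect (kron_vec ?X ?Y) (kron (basis_proj s r0) (basis_proj (map Not s) r1)) =
      expect ?X (basis_proj s r0) * expect ?Y (basis_proj (map Not s) r1)"
    using dims len basis_proj_carrier[of s r0] basis_proj_carrier[of "map Not s" r1]
    by (intro expect_kron) simp_all
  also have "\<dots> = of_bool (select_bits s r0 r1 = r0 \<and> select_bits s r1 r0 = r1)"
    using len by (simp add: expect_basis_proj length_select_bits)
  finally have outcome_0:
    "expect (kron_vec ?X ?Y)
      (kron (kron (basis_proj s r0) (basis_proj (map Not s) r1)) (announce_zero False)) =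
      of_bool (select_bits s r0 r1 = r0 \<and> select_bits s r1 r0 = r1)"
    unfolding announce_zero_def if_False kron_one_mat_1 .
  have outcome_1: "expect (kron_vec ?X ?Y)
      (kron (kron (basis_proj s r1) (basis_proj (map Not s) r0)) (announce_zero True)) = 0"
    unfolding announce_zero_def if_True kron_zero_mat_1
    using dims len carrier_matD[OF basis_proj_carrier[of s r1]]
      carrier_matD[OF basis_proj_carrier[of "map Not s" r0]]
    by (intro expect_zero_mat) simp_all
  show ?thesis
    unfolding state sum_UNIV_bool if_False if_True outcome_0 outcome_1 by (rule add_0_right)
qed

lemma win_prob_regroup:
  "win_prob n (vec 1 (\<lambda>_. 1)) (regroup_mat n) announce_zero
     (\<lambda>s _. basis_proj s) (\<lambda>s _. basis_proj (map Not s)) = (3 / 4) ^ n"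
proof -
  have "win_prob n (vec 1 (\<lambda>_. 1)) (regroup_mat n) announce_zero
      (\<lambda>s _. basis_proj s) (\<lambda>s _. basis_proj (map Not s)) =
    1 / 2 ^ (3 * n) * (\<Sum>r0\<in>bitstrings n. \<Sum>r1\<in>bitstrings n. \<Sum>s\<in>bitstrings n.
      of_bool (select_bits s r0 r1 = r0 \<and> select_bits s r1 r0 = r1))"
    unfolding win_prob_def
    by (intro arg_cong2[where f = "(*)"] refl sum.cong) (simp only: win_prob_regroup_summand)
  also have "\<dots> = 6 ^ n / 8 ^ n"
    by (simp add: sum_select_bits_agree power_mult)
  also have "\<dots> = (3 / 4) ^ n"
    by (simp add: power_divide[symmetric])
  finally show ?thesis .
qed

theorem mainTheorem2:
  fixes n :: nat
  assumes "n \<ge> 1"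
  shows "\<exists>dE \<chi> U d0 d1 d2 R P0 P1.
           is_strategy n dE \<chi> U d0 d1 d2 R P0 P1 \<and>
           win_prob n \<chi> U R P0 P1 = (3/4) ^ n"
  (* the strategy works for n = 0 as well *)
  using is_strategy_regroup[of n] win_prob_regroup[of n] by blast

end
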